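(* Let $G$ be a graph whose adjacency spectrum contains exactly two eigenvalues (counted with multiplicity) different from $2$ and $-1$, namely $r>2$ and $s<-1$. Then: (i) one connected component of $G$ has all its vertices of degree at least $3$, and all other connected components are isomorphic to $K_3$; (ii) if $u,v$ are distinct non-adjacent vertices such that every neighbor of $u$ is also a neighbor of $v$, then $d_v-d_u\geq 5$.
   Context: Graphs are finite and simple; eigenvalues are those of the adjacency matrix; $d_v$ denotes the degree of vertex $v$. *)

theory Defs
  imports "Jordan_Normal_Form.Char_Poly"
begin

text \<open>A finite simple graph on vertex set {0..<n}, given by a symmetric irreflexive
  adjacency relation E (only its values on {0..<n} matter).\<close>

definition simple_graph :: "nat \<Rightarrow> (nat \<Rightarrow> nat \<Rightarrow> bool) \<Rightarrow> bool" where
  "simple_graph n E \<longleftrightarrow> (\<forall>i<n. \<forall>j<n. E i j \<longleftrightarrow> E j i) \<and> (\<forall>i<n. \<not> E i i)"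

definition adj_matrix :: "nat \<Rightarrow> (nat \<Rightarrow> nat \<Rightarrow> bool) \<Rightarrow> real mat" where
  "adj_matrix n E = mat n n (\<lambda>(i,j). if E i j then 1 else 0)"

definition degree :: "nat \<Rightarrow> (nat \<Rightarrow> nat \<Rightarrow> bool) \<Rightarrow> nat \<Rightarrow> nat" where
  "degree n E v = card {w. w < n \<and> E v w}"

definition reach :: "nat \<Rightarrow> (nat \<Rightarrow> nat \<Rightarrow> bool) \<Rightarrow> nat \<Rightarrow> nat \<Rightarrow> bool" where
  "reach n E = (\<lambda>u v. u < n \<and> v < n \<and> E u v)\<^sup>*\<^sup>*"

definition component :: "nat \<Rightarrow> (nat \<Rightarrow> nat \<Rightarrow> bool) \<Rightarrow> nat \<Rightarrow> nat set" where
  "component n E v = {w. w < n \<and> reach n E v w}"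

definition components :: "nat \<Rightarrow> (nat \<Rightarrow> nat \<Rightarrow> bool) \<Rightarrow> nat set set" where
  "components n E = component n E ` {0..<n}"

definition is_K3 :: "(nat \<Rightarrow> nat \<Rightarrow> bool) \<Rightarrow> nat set \<Rightarrow> bool" where
  "is_K3 E C \<longleftrightarrow> card C = 3 \<and> (\<forall>x\<in>C. \<forall>y\<in>C. x \<noteq> y \<longrightarrow> E x y)"

end

theory Submission
  imports Defs "Jordan_Normal_Form.Schur_Decomposition"
begin

text \<open>
  Let \<open>A\<close> be the adjacency matrix and \<open>N = (A - 2I)(A + I)\<close>. Being symmetric with split
  characteristic polynomial, \<open>A\<close> is annihilated by \<open>(t - r)(t - s)(t - 2)(t + 1)\<close>; splitting
  \<open>x\<close> into eigencomponents gives \<open>x \<bullet> N x = (r - 2)(r + 1)|x\<^sub>r|\<^sup>2 + (s - 2)(s + 1)|x\<^sub>s|\<^sup>2 \<ge> 0\<close>,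
  so \<open>N\<close> is positive semidefinite. Its entries are \<open>N\<^sub>v\<^sub>v = d\<^sub>v - 2\<close> and, for \<open>u \<noteq> v\<close>,
  the number of common neighbours of \<open>u\<close> and \<open>v\<close> minus \<open>[u \<sim> v]\<close>.

  The \<open>2 \<times> 2\<close> principal minors of \<open>N\<close> are nonnegative. If \<open>u \<not>\<sim> v\<close> and every neighbour of \<open>u\<close>
  is a neighbour of \<open>v\<close>, this reads \<open>d\<^sub>u\<^sup>2 \<le> (d\<^sub>u - 2)(d\<^sub>v - 2)\<close>, forcing \<open>d\<^sub>v \<ge> d\<^sub>u + 5\<close>. A vertex of
  degree \<open>2\<close> has a zero row in \<open>N\<close>, which forces its component to be a triangle. The indicator
  vector of a component with all degrees \<open>\<ge> 3\<close> has a nonzero projection onto the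
  \<open>r\<close>-eigenspace, supported on that component; as \<open>r\<close> is a simple eigenvalue, there is at most
  one such component; and there is one, since if all degrees were \<open>2\<close> then \<open>N = 0\<close> and
  \<open>r\<^sup>2 - r - 2 = 0\<close>.
\<close>

section \<open>Vectors as functions\<close>

text \<open>Vectors of \<open>\<real>\<^sup>n\<close> are functions \<open>nat \<Rightarrow> real\<close> of which only the values below \<open>n\<close>
  matter; \<open>agree n\<close> is their equality.\<close>

definition agree :: "nat \<Rightarrow> (nat \<Rightarrow> real) \<Rightarrow> (nat \<Rightarrow> real) \<Rightarrow> bool" where
  "agree n x y \<longleftrightarrow> (\<forall>i<n. x i = y i)"

definition mat_app :: "nat \<Rightarrow> real mat \<Rightarrow> (nat \<Rightarrow> real) \<Rightarrow> nat \<Rightarrow> real" where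
  "mat_app n M x = (\<lambda>i. \<Sum>j<n. M $$ (i,j) * x j)"

definition char_app :: "nat \<Rightarrow> real mat \<Rightarrow> real \<Rightarrow> (nat \<Rightarrow> real) \<Rightarrow> nat \<Rightarrow> real" where
  "char_app n M e x = (\<lambda>i. mat_app n M x i - e * x i)"

definition char_prod_app :: "nat \<Rightarrow> real mat \<Rightarrow> real list \<Rightarrow> (nat \<Rightarrow> real) \<Rightarrow> nat \<Rightarrow> real" where
  "char_prod_app n M es = foldr (char_app n M) es"

definition dot :: "nat \<Rightarrow> (nat \<Rightarrow> real) \<Rightarrow> (nat \<Rightarrow> real) \<Rightarrow> real" where
  "dot n x y = (\<Sum>i<n. x i * y i)"

definition in_eigenspace :: "nat \<Rightarrow> real mat \<Rightarrow> real \<Rightarrow> (nat \<Rightarrow> real) \<Rightarrow> bool" where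
  "in_eigenspace n M e x \<longleftrightarrow> agree n (mat_app n M x) (\<lambda>i. e * x i)"

lemma agree_refl [simp]: "agree n x x"
  by (simp add: agree_def)

lemma agree_sym: "agree n x y \<Longrightarrow> agree n y x"
  by (simp add: agree_def)

lemma agree_trans [trans]: "agree n x y \<Longrightarrow> agree n y z \<Longrightarrow> agree n x z"
  by (simp add: agree_def)

lemma mat_app_add: "mat_app n M (\<lambda>i. x i + y i) = (\<lambda>i. mat_app n M x i + mat_app n M y i)"
  by (auto simp: mat_app_def algebra_simps sum.distrib)

lemma mat_app_diff: "mat_app n M (\<lambda>i. x i - y i) = (\<lambda>i. mat_app n M x i - mat_app n M y i)"
  by (auto simp: mat_app_def algebra_simps sum_subtractf)

lemma mat_app_scale: "mat_app n M (\<lambda>i. c * x i) = (\<lambda>i. c * mat_app n M x i)"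
  by (auto simp: mat_app_def algebra_simps sum_distrib_left)

lemma mat_app_cong: "agree n x y \<Longrightarrow> mat_app n M x = mat_app n M y"
  by (auto simp: mat_app_def agree_def intro!: sum.cong)

lemma mat_app_vec: "M \<in> carrier_mat n n \<Longrightarrow> M *\<^sub>v vec n x = vec n (mat_app n M x)"
  by (auto simp: mat_app_def scalar_prod_def lessThan_atLeast0 intro!: sum.cong)

lemma agree_iff_vec_eq: "agree n x y \<longleftrightarrow> vec n x = vec n y"
  by (auto simp: agree_def vec_eq_iff)

lemma mat_app_mult:
  assumes "M \<in> carrier_mat n n" "M' \<in> carrier_mat n n"
  shows "agree n (mat_app n (M * M') x) (mat_app n M (mat_app n M' x))"
proof -
  have "vec n (mat_app n (M * M') x) = M *\<^sub>v (M' *\<^sub>v vec n x)"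
    using assms by (simp add: assoc_mult_mat_vec flip: mat_app_vec)
  then show ?thesis
    using assms by (simp add: agree_iff_vec_eq mat_app_vec)
qed

lemma mat_app_one: "agree n (mat_app n (1\<^sub>m n) x) x"
  by (simp add: agree_iff_vec_eq flip: mat_app_vec)

lemma char_app_add: "char_app n M e (\<lambda>i. x i + y i) = (\<lambda>i. char_app n M e x i + char_app n M e y i)"
  by (auto simp: char_app_def mat_app_add algebra_simps)

lemma char_app_scale: "char_app n M e (\<lambda>i. c * x i) = (\<lambda>i. c * char_app n M e x i)"
  by (auto simp: char_app_def mat_app_scale algebra_simps)

lemma char_app_cong: "agree n x y \<Longrightarrow> agree n (char_app n M e x) (char_app n M e y)"
  by (auto simp: char_app_def agree_def mat_app_cong[of n x y])

lemma char_app_zero: "agree n x (\<lambda>_. 0) \<Longrightarrow> agree n (char_app n M e x) (\<lambda>_. 0)"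
  using char_app_cong[of n x "\<lambda>_. 0"] by (simp add: char_app_def mat_app_def)

lemma char_app_char_app:
  "char_app n M e (char_app n M e' x) =
     (\<lambda>i. mat_app n M (mat_app n M x) i - (e + e') * mat_app n M x i + e * e' * x i)"
  by (auto simp: char_app_def mat_app_diff mat_app_scale algebra_simps)

lemma char_app_commute: "char_app n M e (char_app n M e' x) = char_app n M e' (char_app n M e x)"
  unfolding char_app_char_app by (simp add: algebra_simps)

lemma funpow_char_app_commute:
  "(char_app n M e ^^ k) (char_app n M e' x) = char_app n M e' ((char_app n M e ^^ k) x)"
  by (induct k) (auto simp: char_app_commute)

lemma in_eigenspace_char_app:
  "in_eigenspace n M e x \<Longrightarrow> agree n (char_app n M c x) (\<lambda>i. (e - c) * x i)"
  by (auto simp: in_eigenspace_def agree_def char_app_def algebra_simps)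

lemma in_eigenspace_iff_char_app:
  "in_eigenspace n M e x \<longleftrightarrow> agree n (char_app n M e x) (\<lambda>_. 0)"
  by (auto simp: in_eigenspace_def agree_def char_app_def)

lemma char_prod_app_append:
  "char_prod_app n M (es @ es') x = char_prod_app n M es (char_prod_app n M es' x)"
  by (simp add: char_prod_app_def)

lemma char_prod_app_replicate: "char_prod_app n M (replicate k e) x = (char_app n M e ^^ k) x"
  by (induct k) (auto simp: char_prod_app_def)

section \<open>Schur triangularization: Cayley--Hamilton and simple eigenvalues\<close>

locale similar_mats =
  fixes n :: nat and A B P Q :: "real mat"
  assumes A: "A \<in> carrier_mat n n" and wit: "similar_mat_wit A B P Q"
begin

lemmas carrier = similar_mat_witD2(5-7)[OF A wit]

lemma Q_P_app: "agree n (mat_app n Q (mat_app n P x)) x"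
  using mat_app_mult[of Q n P x] mat_app_one[of n x] carrier similar_mat_witD2(2)[OF A wit]
  by (metis agree_sym agree_trans)

lemma P_Q_app: "agree n (mat_app n P (mat_app n Q x)) x"
  using mat_app_mult[of P n Q x] mat_app_one[of n x] carrier similar_mat_witD2(1)[OF A wit]
  by (metis agree_sym agree_trans)

lemma A_app: "agree n (mat_app n A x) (mat_app n P (mat_app n B (mat_app n Q x)))"
proof -
  have "agree n (mat_app n A x) (mat_app n (P * B) (mat_app n Q x))"
    using carrier by (subst similar_mat_witD2(3)[OF A wit]) (intro mat_app_mult; auto)
  also have "agree n \<dots> (mat_app n P (mat_app n B (mat_app n Q x)))"
    using carrier by (intro mat_app_mult) auto
  finally show ?thesis .
qed

lemma char_app_similar: "agree n (char_app n A e x) (mat_app n P (char_app n B e (mat_app n Q x)))"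
  using A_app[of x] P_Q_app[of x]
  by (auto simp: agree_def char_app_def mat_app_diff mat_app_scale)

lemma char_prod_app_similar:
  "agree n (char_prod_app n A es x) (mat_app n P (char_prod_app n B es (mat_app n Q x)))"
proof (induct es)
  case Nil
  then show ?case using P_Q_app[of x] by (simp add: char_prod_app_def agree_sym)
next
  case (Cons e es)
  let ?y = "char_prod_app n B es (mat_app n Q x)"
  have "agree n (char_prod_app n A (e # es) x) (char_app n A e (mat_app n P ?y))"
    using Cons by (simp add: char_prod_app_def char_app_cong)
  also have "agree n \<dots> (mat_app n P (char_app n B e (mat_app n Q (mat_app n P ?y))))"
    by (rule char_app_similar)
  also have "mat_app n P (char_app n B e (mat_app n Q (mat_app n P ?y))) = mat_app n P (char_app n B e ?y)"
    by (intro mat_app_cong char_app_cong Q_P_app)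
  finally show ?case by (simp add: char_prod_app_def)
qed

lemma in_eigenspace_similar:
  assumes "in_eigenspace n A e u"
  shows "in_eigenspace n B e (mat_app n Q u)"
proof -
  have "agree n (mat_app n B (mat_app n Q u)) (mat_app n Q (mat_app n P (mat_app n B (mat_app n Q u))))"
    using Q_P_app agree_sym by blast
  also have "mat_app n Q (mat_app n P (mat_app n B (mat_app n Q u))) = mat_app n Q (mat_app n A u)"
    by (intro mat_app_cong agree_sym[OF A_app])
  also have "\<dots> = mat_app n Q (\<lambda>i. e * u i)"
    using assms by (intro mat_app_cong) (simp add: in_eigenspace_def)
  finally show ?thesis by (simp add: in_eigenspace_def mat_app_scale)
qed

lemma mat_app_Q_zero: "agree n (mat_app n Q u) (\<lambda>_. 0) \<Longrightarrow> agree n u (\<lambda>_. 0)"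
  using P_Q_app[of u] mat_app_cong[of n "mat_app n Q u" "\<lambda>_. 0" P]
  by (simp add: agree_def mat_app_def)

end

context
  fixes n :: nat and B :: "real mat"
  assumes B: "B \<in> carrier_mat n n" and upper: "upper_triangular B"
begin

lemma upper_triangular_mat_app:
  assumes i: "i < n" and zero: "\<And>j. i < j \<Longrightarrow> j < n \<Longrightarrow> x j = 0"
  shows "mat_app n B x i = B $$ (i,i) * x i"
proof -
  have "mat_app n B x i = (\<Sum>j<n. if j = i then B $$ (i,i) * x i else 0)"
    unfolding mat_app_def
  proof (intro sum.cong refl)
    fix j assume "j \<in> {..<n}"
    then show "B $$ (i, j) * x j = (if j = i then B $$ (i,i) * x i else 0)"
      using upper i B zero[of j] by (cases "j < i") (auto dest: upper_triangularD)
  qed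
  also have "\<dots> = B $$ (i,i) * x i" using i by simp
  finally show ?thesis .
qed

text \<open>Cayley--Hamilton for triangular matrices; the induction runs over the support of \<open>x\<close>.\<close>
lemma upper_triangular_char_prod_diag:
  "k \<le> n \<Longrightarrow> (\<And>i. k \<le> i \<Longrightarrow> i < n \<Longrightarrow> x i = 0) \<Longrightarrow>
     agree n (char_prod_app n B (take k (diag_mat B)) x) (\<lambda>_. 0)"
proof (induct k arbitrary: x)
  case 0
  then show ?case by (auto simp: char_prod_app_def agree_def)
next
  case (Suc k)
  have "take (Suc k) (diag_mat B) = take k (diag_mat B) @ [B $$ (k,k)]"
    using Suc(2) B by (simp add: take_Suc_conv_app_nth diag_mat_def)
  moreover
  let ?y = "char_app n B (B $$ (k,k)) x"
  have "?y i = 0" if "k \<le> i" "i < n" for i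
    using upper_triangular_mat_app[of i x] Suc(3)[of i] Suc(3) that
    by (cases "i = k") (auto simp: char_app_def)
  then have "agree n (char_prod_app n B (take k (diag_mat B)) ?y) (\<lambda>_. 0)"
    using Suc by auto
  ultimately show ?case by (simp add: char_prod_app_append char_prod_app_def)
qed

lemma upper_triangular_eigenvector_zero:
  assumes diag: "\<And>k. 0 < k \<Longrightarrow> k < n \<Longrightarrow> B $$ (k,k) \<noteq> e"
    and z: "in_eigenspace n B e z" and z0: "z 0 = 0"
  shows "agree n z (\<lambda>_. 0)"
proof -
  have zero_from_top: "z (n - m) = 0" if "0 < m" "m \<le> n" for m
    using that
  proof (induct m rule: less_induct)
    case (less m)
    let ?i = "n - m"
    have "z j = 0" if "?i < j" "j < n" for j
      using less(1)[of "n - j"] less(2,3) that by auto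
    then have "mat_app n B z ?i = B $$ (?i,?i) * z ?i"
      using less(2,3) by (intro upper_triangular_mat_app) auto
    then have "(B $$ (?i,?i) - e) * z ?i = 0"
      using z less(2,3) by (auto simp: in_eigenspace_def agree_def algebra_simps)
    then show ?case using diag[of ?i] z0 less(2,3) by (cases "?i = 0") auto
  qed
  show ?thesis
    unfolding agree_def using zero_from_top[of "n - i" for i] by auto
qed

end

lemma schur_triangularization:
  fixes A :: "real mat"
  assumes A: "A \<in> carrier_mat n n" and cp: "char_poly A = (\<Prod>e\<leftarrow>es. [:- e, 1:])"
  obtains B P Q where "similar_mat_wit A B P Q" "upper_triangular B"
    "length es = n" "\<And>k. k < n \<Longrightarrow> B $$ (k,k) = es ! k"
proof -
  obtain B P Q where "schur_decomposition A es = (B,P,Q)"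
    by (cases "schur_decomposition A es") auto
  from schur_decomposition[OF A cp this]
  have wit: "similar_mat_wit A B P Q" and "upper_triangular B" and diag: "diag_mat B = es"
    by auto
  moreover have "dim_row B = n"
    using similar_mat_witD2(5)[OF A wit] by simp
  ultimately show ?thesis
    using that by (auto simp: diag_mat_def)
qed

theorem cayley_hamilton_factored:
  assumes A: "A \<in> carrier_mat n n" and cp: "char_poly A = (\<Prod>e\<leftarrow>es. [:- e, 1:])"
  shows "agree n (char_prod_app n A es x) (\<lambda>_. 0)"
proof -
  obtain B P Q where wit: "similar_mat_wit A B P Q" and upper: "upper_triangular B"
    and len: "length es = n" and diag: "\<And>k. k < n \<Longrightarrow> B $$ (k,k) = es ! k"
    using schur_triangularization[OF A cp] by blast
  interpret similar_mats n A B P Q by unfold_locales (fact A wit)+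
  have "diag_mat B = es"
    using carrier(1) len diag by (auto simp: diag_mat_def intro: nth_equalityI)
  then have "agree n (char_prod_app n B es (mat_app n Q x)) (\<lambda>_. 0)"
    using upper_triangular_char_prod_diag[OF carrier(1) upper, of n] len by auto
  then have "mat_app n P (char_prod_app n B es (mat_app n Q x)) = (\<lambda>_. 0)"
    by (simp add: mat_app_cong) (simp add: mat_app_def)
  then show ?thesis using char_prod_app_similar[of es x] by simp
qed

theorem simple_root_eigenspace:
  assumes A: "A \<in> carrier_mat n n" and cp: "char_poly A = (\<Prod>e\<leftarrow>e0 # es. [:- e, 1:])"
    and simple: "e0 \<notin> set es"
    and u: "in_eigenspace n A e0 u" "\<not> agree n u (\<lambda>_. 0)" and w: "in_eigenspace n A e0 w"
  shows "\<exists>c. agree n w (\<lambda>i. c * u i)"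
proof -
  obtain B P Q where wit: "similar_mat_wit A B P Q" and upper: "upper_triangular B"
    and len: "length (e0 # es) = n" and diag: "\<And>k. k < n \<Longrightarrow> B $$ (k,k) = (e0 # es) ! k"
    using schur_triangularization[OF A cp] by blast
  interpret similar_mats n A B P Q by unfold_locales (fact A wit)+
  have diag_ne: "B $$ (k,k) \<noteq> e0" if "0 < k" "k < n" for k
    using diag[of k] len simple that nth_mem[of "k - 1" es] by (auto simp: nth_Cons')
  have zero: "agree n z (\<lambda>_. 0)" if "in_eigenspace n B e0 z" "z 0 = 0" for z
    using upper_triangular_eigenvector_zero[OF carrier(1) upper, of e0 z] diag_ne that by blast
  define \<alpha> where "\<alpha> = mat_app n Q u 0"
  define \<beta> where "\<beta> = mat_app n Q w 0"
  have "\<alpha> \<noteq> 0"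
    using zero[OF in_eigenspace_similar[OF u(1)]] mat_app_Q_zero u(2) by (auto simp: \<alpha>_def)
  define z where "z = (\<lambda>i. \<alpha> * mat_app n Q w i - \<beta> * mat_app n Q u i)"
  have "z = mat_app n Q (\<lambda>i. \<alpha> * w i - \<beta> * u i)"
    by (simp add: z_def mat_app_diff mat_app_scale)
  moreover have "in_eigenspace n B e0 z"
    using in_eigenspace_similar[OF u(1)] in_eigenspace_similar[OF w]
    by (simp add: in_eigenspace_def agree_def z_def mat_app_diff mat_app_scale algebra_simps)
  then have "agree n z (\<lambda>_. 0)"
    by (rule zero) (simp add: z_def \<alpha>_def \<beta>_def)
  ultimately have "agree n (\<lambda>i. \<alpha> * w i - \<beta> * u i) (\<lambda>_. 0)"
    using mat_app_Q_zero by simp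
  then have "agree n w (\<lambda>i. (\<beta> / \<alpha>) * u i)"
    using \<open>\<alpha> \<noteq> 0\<close> by (auto simp: agree_def field_simps)
  then show ?thesis by blast
qed

lemma eigenvector_exists:
  assumes A: "A \<in> carrier_mat n n" and root: "poly (char_poly A) e = 0"
  shows "\<exists>u. in_eigenspace n A e u \<and> \<not> agree n u (\<lambda>_. 0)"
proof -
  obtain v where v: "v \<in> carrier_vec n" "v \<noteq> 0\<^sub>v n" "A *\<^sub>v v = e \<cdot>\<^sub>v v"
    using root eigenvalue_root_char_poly[OF A] A by (auto simp: eigenvalue_def eigenvector_def)
  define u where "u i = v $ i" for i
  have v_u: "v = vec n u"
    using v(1) by (auto simp: u_def)
  have "vec n (\<lambda>i. e * u i) = e \<cdot>\<^sub>v vec n u"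
    by auto
  then have "in_eigenspace n A e u"
    using v(3) unfolding in_eigenspace_def agree_iff_vec_eq v_u mat_app_vec[OF A, symmetric]
    by simp
  moreover have "\<not> agree n u (\<lambda>_. 0)"
    using v(2) unfolding agree_iff_vec_eq v_u zero_vec_def by simp
  ultimately show ?thesis by blast
qed

section \<open>Symmetric matrices\<close>

lemma dot_add_left: "dot n (\<lambda>i. x i + y i) z = dot n x z + dot n y z"
  by (simp add: dot_def algebra_simps sum.distrib)

lemma dot_add_right: "dot n z (\<lambda>i. x i + y i) = dot n z x + dot n z y"
  by (simp add: dot_def algebra_simps sum.distrib)

lemma dot_scale_left: "dot n (\<lambda>i. c * x i) z = c * dot n x z"
  by (simp add: dot_def algebra_simps sum_distrib_left)

lemma dot_scale_right: "dot n z (\<lambda>i. c * x i) = c * dot n z x"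
  by (simp add: dot_def algebra_simps sum_distrib_left)

lemma dot_diff_left: "dot n (\<lambda>i. x i - y i) z = dot n x z - dot n y z"
  by (simp add: dot_def algebra_simps sum_subtractf)

lemma dot_diff_right: "dot n z (\<lambda>i. x i - y i) = dot n z x - dot n z y"
  by (simp add: dot_def algebra_simps sum_subtractf)

lemma dot_cong: "agree n x x' \<Longrightarrow> agree n y y' \<Longrightarrow> dot n x y = dot n x' y'"
  by (simp add: dot_def agree_def)

lemma dot_self_nonneg: "0 \<le> dot n x x"
  by (simp add: dot_def sum_nonneg)

lemma dot_self_eq_zero: "dot n x x = 0 \<longleftrightarrow> agree n x (\<lambda>_. 0)"
  unfolding dot_def agree_def by (subst sum_nonneg_eq_0_iff) auto

locale sym_mat =
  fixes n :: nat and M :: "real mat"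
  assumes symmetric: "\<And>i j. i < n \<Longrightarrow> j < n \<Longrightarrow> M $$ (i,j) = M $$ (j,i)"
begin

lemma dot_mat_app: "dot n (mat_app n M x) y = dot n x (mat_app n M y)"
proof -
  have "dot n (mat_app n M x) y = (\<Sum>i<n. \<Sum>j<n. M $$ (i,j) * x j * y i)"
    by (simp add: dot_def mat_app_def sum_distrib_right)
  also have "\<dots> = (\<Sum>j<n. \<Sum>i<n. x j * (M $$ (j,i) * y i))"
    by (subst sum.swap) (simp add: symmetric mult_ac)
  also have "\<dots> = dot n x (mat_app n M y)"
    by (simp add: dot_def mat_app_def sum_distrib_left)
  finally show ?thesis .
qed

lemma dot_char_app: "dot n (char_app n M e x) y = dot n x (char_app n M e y)"
  by (simp add: char_app_def dot_diff_left dot_diff_right dot_scale_left dot_scale_right dot_mat_app)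

lemma eigenspaces_orthogonal:
  assumes "in_eigenspace n M e x" "in_eigenspace n M e' y" "e \<noteq> e'"
  shows "dot n x y = 0"
proof -
  have "e * dot n x y = dot n (mat_app n M x) y"
    using assms(1) by (simp add: in_eigenspace_def dot_cong[of n _ "\<lambda>i. e * x i" y y] dot_scale_left)
  also have "\<dots> = dot n x (mat_app n M y)"
    by (rule dot_mat_app)
  also have "\<dots> = e' * dot n x y"
    using assms(2) by (simp add: in_eigenspace_def dot_cong[of n x x _ "\<lambda>i. e' * y i"] dot_scale_right)
  finally show ?thesis using assms(3) by simp
qed

text \<open>If \<open>(M - e)\<^sup>2 x = 0\<close> then \<open>|(M - e) x|\<^sup>2 = x \<bullet> (M - e)\<^sup>2 x = 0\<close>.\<close>
lemma funpow_char_app_kernel: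
  "agree n ((char_app n M e ^^ k) x) (\<lambda>_. 0) \<Longrightarrow> agree n (char_app n M e x) (\<lambda>_. 0)"
proof (induct k arbitrary: x)
  case 0
  then show ?case by (simp add: char_app_zero)
next
  case (Suc k)
  then have "agree n (char_app n M e (char_app n M e x)) (\<lambda>_. 0)"
    by (simp add: funpow_Suc_right del: funpow.simps)
  then have "dot n x (char_app n M e (char_app n M e x)) = 0"
    using dot_cong[of n x x] by (simp add: dot_def)
  then show ?case
    by (simp add: dot_char_app flip: dot_self_eq_zero)
qed

end

text \<open>Lagrange interpolation of \<open>1, t, t\<^sup>2, t\<^sup>3\<close> at four nodes, in the form in which it
  decomposes a vector into eigenvectors: \<open>m\<^sub>k\<close> plays the role of \<open>M\<^sup>k x\<close>.\<close>
lemma lagrange_four: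
  fixes a b c d :: real
  assumes "distinct [a, b, c, d]"
  shows "x = (m3 - (b+c+d) * m2 + (b*c + c*d + d*b) * m1 - b*c*d * x) / ((a-b)*(a-c)*(a-d))
           + (m3 - (a+c+d) * m2 + (a*c + c*d + d*a) * m1 - a*c*d * x) / ((b-a)*(b-c)*(b-d))
           + (m3 - (a+b+d) * m2 + (a*b + b*d + d*a) * m1 - a*b*d * x) / ((c-a)*(c-b)*(c-d))
           + (m3 - (a+b+c) * m2 + (a*b + b*c + c*a) * m1 - a*b*c * x) / ((d-a)*(d-b)*(d-c))"
proof -
  define P where "P = (a-b)*(a-c)*(a-d)*(b-c)*(b-d)*(c-d)"
  have P: "P \<noteq> 0"
    using assms by (auto simp: P_def)
  have divide_by_factor: "y / D = y * q / P" if "D * q = P" for y D q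
    using that P by auto
  have "x * P = (m3 - (b+c+d) * m2 + (b*c + c*d + d*b) * m1 - b*c*d * x) * ((b-c)*(b-d)*(c-d))
           + (m3 - (a+c+d) * m2 + (a*c + c*d + d*a) * m1 - a*c*d * x) * (-(a-c)*(a-d)*(c-d))
           + (m3 - (a+b+d) * m2 + (a*b + b*d + d*a) * m1 - a*b*d * x) * ((a-b)*(a-d)*(b-d))
           + (m3 - (a+b+c) * m2 + (a*b + b*c + c*a) * m1 - a*b*c * x) * (-(a-b)*(a-c)*(b-c))"
    unfolding P_def by (simp add: algebra_simps)
  then have "x = (\<dots>) / P"
    using P by (simp add: eq_divide_eq)
  also have "\<dots> = (m3 - (b+c+d) * m2 + (b*c + c*d + d*b) * m1 - b*c*d * x) * ((b-c)*(b-d)*(c-d)) / P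
           + (m3 - (a+c+d) * m2 + (a*c + c*d + d*a) * m1 - a*c*d * x) * (-(a-c)*(a-d)*(c-d)) / P
           + (m3 - (a+b+d) * m2 + (a*b + b*d + d*a) * m1 - a*b*d * x) * ((a-b)*(a-d)*(b-d)) / P
           + (m3 - (a+b+c) * m2 + (a*b + b*c + c*a) * m1 - a*b*c * x) * (-(a-b)*(a-c)*(b-c)) / P"
    by (simp add: add_divide_distrib)
  finally show ?thesis
    using divide_by_factor[of "(a-b)*(a-c)*(a-d)" "(b-c)*(b-d)*(c-d)"]
      divide_by_factor[of "(b-a)*(b-c)*(b-d)" "-(a-c)*(a-d)*(c-d)"]
      divide_by_factor[of "(c-a)*(c-b)*(c-d)" "(a-b)*(a-d)*(b-d)"]
      divide_by_factor[of "(d-a)*(d-b)*(d-c)" "-(a-b)*(a-c)*(b-c)"]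
    unfolding P_def by (simp add: algebra_simps)
qed

lemma char_app_char_app_char_app:
  "char_app n M a (char_app n M b (char_app n M c x)) =
     (\<lambda>i. mat_app n M (mat_app n M (mat_app n M x)) i - (a+b+c) * mat_app n M (mat_app n M x) i
        + (a*b + b*c + c*a) * mat_app n M x i - a*b*c * x i)"
  unfolding char_app_char_app unfolding char_app_def
  by (auto simp: mat_app_diff mat_app_scale mat_app_add algebra_simps)

definition spectral_proj ::
    "nat \<Rightarrow> real mat \<Rightarrow> real \<Rightarrow> real \<Rightarrow> real \<Rightarrow> real \<Rightarrow> (nat \<Rightarrow> real) \<Rightarrow> nat \<Rightarrow> real" where
  "spectral_proj n M e a b c x =
     (\<lambda>i. char_app n M a (char_app n M b (char_app n M c x)) i / ((e-a)*(e-b)*(e-c)))"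

lemma in_eigenspace_spectral_proj:
  assumes "agree n (char_app n M e (char_app n M a (char_app n M b (char_app n M c x)))) (\<lambda>_. 0)"
  shows "in_eigenspace n M e (spectral_proj n M e a b c x)"
proof -
  have "char_app n M e (spectral_proj n M e a b c x) =
      (\<lambda>i. char_app n M e (char_app n M a (char_app n M b (char_app n M c x))) i / ((e-a)*(e-b)*(e-c)))"
    unfolding spectral_proj_def using char_app_scale[of n M e "1 / ((e-a)*(e-b)*(e-c))"] by simp
  then show ?thesis
    using assms by (simp add: in_eigenspace_iff_char_app agree_def)
qed

locale four_spectrum = sym_mat +
  fixes e1 e2 e3 e4 :: real
  assumes distinct: "distinct [e1, e2, e3, e4]"
    and annihilated:
      "\<And>x. agree n (char_app n M e1 (char_app n M e2 (char_app n M e3 (char_app n M e4 x)))) (\<lambda>_. 0)"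
begin

abbreviation "p1 \<equiv> spectral_proj n M e1 e2 e3 e4"
abbreviation "p2 \<equiv> spectral_proj n M e2 e1 e3 e4"
abbreviation "p3 \<equiv> spectral_proj n M e3 e1 e2 e4"
abbreviation "p4 \<equiv> spectral_proj n M e4 e1 e2 e3"

lemma in_eigenspace_p:
  "in_eigenspace n M e1 (p1 x)" "in_eigenspace n M e2 (p2 x)"
  "in_eigenspace n M e3 (p3 x)" "in_eigenspace n M e4 (p4 x)"
  by (intro in_eigenspace_spectral_proj; metis annihilated char_app_commute)+

lemma spectral_decomposition: "x = (\<lambda>i. p1 x i + p2 x i + p3 x i + p4 x i)"
proof
  fix i
  show "x i = p1 x i + p2 x i + p3 x i + p4 x i"
    unfolding spectral_proj_def char_app_char_app_char_app
    by (rule lagrange_four) (use distinct in auto)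
qed

lemma char_app_spectral:
  "agree n (char_app n M c (\<lambda>i. k1 * p1 x i + k2 * p2 x i + k3 * p3 x i + k4 * p4 x i))
     (\<lambda>i. k1 * (e1 - c) * p1 x i + k2 * (e2 - c) * p2 x i + k3 * (e3 - c) * p3 x i + k4 * (e4 - c) * p4 x i)"
  using in_eigenspace_char_app[OF in_eigenspace_p(1), where c = c]
    in_eigenspace_char_app[OF in_eigenspace_p(2), where c = c]
    in_eigenspace_char_app[OF in_eigenspace_p(3), where c = c]
    in_eigenspace_char_app[OF in_eigenspace_p(4), where c = c]
  by (simp add: char_app_add char_app_scale agree_def)

lemma dot_spectral:
  assumes "agree n z (\<lambda>i. k1 * p1 x i + k2 * p2 x i + k3 * p3 x i + k4 * p4 x i)"
  shows "dot n x z = k1 * dot n (p1 x) (p1 x) + k2 * dot n (p2 x) (p2 x)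
    + k3 * dot n (p3 x) (p3 x) + k4 * dot n (p4 x) (p4 x)"
proof -
  have orth: "dot n (p1 x) (p2 x) = 0" "dot n (p1 x) (p3 x) = 0" "dot n (p1 x) (p4 x) = 0"
    "dot n (p2 x) (p1 x) = 0" "dot n (p2 x) (p3 x) = 0" "dot n (p2 x) (p4 x) = 0"
    "dot n (p3 x) (p1 x) = 0" "dot n (p3 x) (p2 x) = 0" "dot n (p3 x) (p4 x) = 0"
    "dot n (p4 x) (p1 x) = 0" "dot n (p4 x) (p2 x) = 0" "dot n (p4 x) (p3 x) = 0"
    using distinct by (auto intro: eigenspaces_orthogonal in_eigenspace_p)
  have "dot n x z = dot n (\<lambda>i. p1 x i + p2 x i + p3 x i + p4 x i)
      (\<lambda>i. k1 * p1 x i + k2 * p2 x i + k3 * p3 x i + k4 * p4 x i)"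
    by (subst spectral_decomposition) (rule dot_cong[OF agree_refl assms])
  then show ?thesis
    by (simp only: dot_add_left dot_add_right dot_scale_right orth)
qed

lemma quadratic_form_char_app:
  "dot n x (char_app n M c x) = (e1 - c) * dot n (p1 x) (p1 x) + (e2 - c) * dot n (p2 x) (p2 x)
    + (e3 - c) * dot n (p3 x) (p3 x) + (e4 - c) * dot n (p4 x) (p4 x)"
  using char_app_spectral[of c 1 x 1 1 1] by (intro dot_spectral) (simp flip: spectral_decomposition)

lemma quadratic_form_char_app2:
  "dot n x (char_app n M c (char_app n M d x)) =
    (e1 - c) * (e1 - d) * dot n (p1 x) (p1 x) + (e2 - c) * (e2 - d) * dot n (p2 x) (p2 x)
    + (e3 - c) * (e3 - d) * dot n (p3 x) (p3 x) + (e4 - c) * (e4 - d) * dot n (p4 x) (p4 x)"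
proof (rule dot_spectral)
  have "agree n (char_app n M c (char_app n M d x))
      (char_app n M c (\<lambda>i. (e1 - d) * p1 x i + (e2 - d) * p2 x i + (e3 - d) * p3 x i + (e4 - d) * p4 x i))"
    using char_app_spectral[of d 1 x 1 1 1] by (intro char_app_cong) (simp flip: spectral_decomposition)
  also have "agree n \<dots> (\<lambda>i. (e1 - d) * (e1 - c) * p1 x i + (e2 - d) * (e2 - c) * p2 x i
      + (e3 - d) * (e3 - c) * p3 x i + (e4 - d) * (e4 - c) * p4 x i)"
    by (rule char_app_spectral)
  finally show "agree n (char_app n M c (char_app n M d x)) (\<lambda>i. (e1 - c) * (e1 - d) * p1 x i
      + (e2 - c) * (e2 - d) * p2 x i + (e3 - c) * (e3 - d) * p3 x i + (e4 - c) * (e4 - d) * p4 x i)"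
    by (simp add: agree_def mult_ac)
qed

end

section \<open>Adjacency matrices\<close>

definition unit_fn :: "nat \<Rightarrow> nat \<Rightarrow> real" where
  "unit_fn w = (\<lambda>i. if i = w then 1 else 0)"

definition common_nbrs :: "nat \<Rightarrow> (nat \<Rightarrow> nat \<Rightarrow> bool) \<Rightarrow> nat \<Rightarrow> nat \<Rightarrow> nat" where
  "common_nbrs n E v w = card {j. j < n \<and> E v j \<and> E j w}"

definition vanishes_off :: "nat \<Rightarrow> nat set \<Rightarrow> (nat \<Rightarrow> real) \<Rightarrow> bool" where
  "vanishes_off n H x \<longleftrightarrow> (\<forall>i<n. i \<notin> H \<longrightarrow> x i = 0)"

lemma dot_unit_fn:
  assumes "u < n"
  shows "dot n (unit_fn u) y = y u"
proof -
  have "dot n (unit_fn u) y = (\<Sum>i<n. if i = u then y u else 0)"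
    unfolding dot_def unit_fn_def by (rule sum.cong) auto
  then show ?thesis
    using assms by simp
qed

lemma sum_indicator_card: "(\<Sum>j<(n::nat). if P j then 1 else 0 :: real) = real (card {j. j < n \<and> P j})"
proof -
  have "(\<Sum>j<n. if P j then 1 else 0 :: real) = (\<Sum>j\<in>{j\<in>{..<n}. P j}. 1)"
    by (subst sum.inter_filter) auto
  also have "{j\<in>{..<n}. P j} = {j. j < n \<and> P j}"
    by auto
  finally show ?thesis
    by simp
qed

lemma quadratic_nonneg_discriminant:
  fixes \<alpha> \<beta> \<gamma> :: real
  assumes "0 \<le> \<alpha>" and nonneg: "\<And>t. 0 \<le> t * t * \<alpha> + 2 * t * \<beta> + \<gamma>"
  shows "\<beta>\<^sup>2 \<le> \<alpha> * \<gamma>"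
proof (cases "\<alpha> = 0")
  case True
  have "0 \<le> (-(\<gamma> + 1) / (2 * \<beta>)) * (-(\<gamma> + 1) / (2 * \<beta>)) * \<alpha> + 2 * (-(\<gamma> + 1) / (2 * \<beta>)) * \<beta> + \<gamma>"
    by (rule nonneg)
  then show ?thesis
    using True by (cases "\<beta> = 0") (auto simp: field_simps)
next
  case False
  have "0 \<le> (-\<beta> / \<alpha>) * (-\<beta> / \<alpha>) * \<alpha> + 2 * (-\<beta> / \<alpha>) * \<beta> + \<gamma>"
    by (rule nonneg)
  also have "\<dots> = (\<alpha> * \<gamma> - \<beta>\<^sup>2) / \<alpha>"
    using False by (simp add: field_simps power2_eq_square)
  finally show ?thesis
    using False assms(1) by (simp add: zero_le_divide_iff)
qed

locale sgraph =
  fixes n :: nat and E :: "nat \<Rightarrow> nat \<Rightarrow> bool"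
  assumes simple: "simple_graph n E"
begin

abbreviation "Adj \<equiv> adj_matrix n E"

abbreviation "N x \<equiv> char_app n Adj 2 (char_app n Adj (-1) x)"

lemma E_sym: "i < n \<Longrightarrow> j < n \<Longrightarrow> E i j \<longleftrightarrow> E j i"
  using simple by (simp add: simple_graph_def)

lemma E_irrefl: "i < n \<Longrightarrow> \<not> E i i"
  using simple by (simp add: simple_graph_def)

lemma Adj_entry: "i < n \<Longrightarrow> j < n \<Longrightarrow> Adj $$ (i,j) = (if E i j then 1 else 0)"
  by (simp add: adj_matrix_def)

sublocale sym_mat n Adj
  by unfold_locales (simp add: Adj_entry E_sym)

lemma mat_app_unit_fn: "w < n \<Longrightarrow> i < n \<Longrightarrow> mat_app n Adj (unit_fn w) i = (if E i w then 1 else 0)"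
  by (simp add: mat_app_def unit_fn_def Adj_entry if_distrib cong: if_cong)

lemma mat_app_mat_app_unit_fn:
  assumes "w < n" "v < n"
  shows "mat_app n Adj (mat_app n Adj (unit_fn w)) v = real (common_nbrs n E v w)"
proof -
  have "mat_app n Adj (mat_app n Adj (unit_fn w)) v = (\<Sum>j<n. if E v j \<and> E j w then 1 else 0)"
    unfolding mat_app_def [of n Adj "mat_app n Adj (unit_fn w)"]
    by (intro sum.cong refl) (simp add: Adj_entry mat_app_unit_fn assms)
  then show ?thesis
    by (simp add: sum_indicator_card common_nbrs_def)
qed

lemma N_unit_fn:
  "v < n \<Longrightarrow> w < n \<Longrightarrow>
    N (unit_fn w) v = real (common_nbrs n E v w) - (if E v w then 1 else 0) - (if v = w then 2 else 0)"
  by (simp add: char_app_char_app mat_app_mat_app_unit_fn mat_app_unit_fn) (simp add: unit_fn_def)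

lemma common_nbrs_self: "u < n \<Longrightarrow> common_nbrs n E u u = degree n E u"
  unfolding common_nbrs_def degree_def by (rule arg_cong[where f = card]) (auto simp: E_sym)

lemma N_unit_fn_diag: "u < n \<Longrightarrow> N (unit_fn u) u = real (degree n E u) - 2"
  by (simp add: N_unit_fn common_nbrs_self E_irrefl)

lemma N_unit_fn_sym: "v < n \<Longrightarrow> w < n \<Longrightarrow> N (unit_fn w) v = N (unit_fn v) w"
proof -
  assume "v < n" "w < n"
  then have "common_nbrs n E v w = common_nbrs n E w v"
    unfolding common_nbrs_def by (intro arg_cong[where f = card]) (auto simp: E_sym)
  with \<open>v < n\<close> \<open>w < n\<close> show ?thesis
    by (simp add: N_unit_fn E_sym)
qed

lemma N_entrywise:
  assumes "v < n"
  shows "N x v = dot n (N (unit_fn v)) x"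
proof -
  have "N x v = dot n (char_app n Adj (-1) (char_app n Adj 2 (unit_fn v))) x"
    using assms by (simp add: dot_char_app dot_unit_fn)
  then show ?thesis
    by (simp add: char_app_commute)
qed

lemma reach_sym: "reach n E u v \<Longrightarrow> reach n E v u"
  unfolding reach_def
proof (induct rule: rtranclp_induct)
  case (step y z)
  then show ?case
    using E_sym by (blast intro: converse_rtranclp_into_rtranclp)
qed simp

lemma component_eq: "w \<in> component n E v \<Longrightarrow> component n E w = component n E v"
  unfolding component_def using reach_sym unfolding reach_def
  by (auto intro: rtranclp_trans)

lemma component_self: "v < n \<Longrightarrow> v \<in> component n E v"
  by (simp add: component_def reach_def)

lemma component_closed: "w \<in> component n E v \<Longrightarrow> j < n \<Longrightarrow> E w j \<Longrightarrow> j \<in> component n E v"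
  unfolding component_def reach_def by (auto intro: rtranclp.rtrancl_into_rtrancl)

lemma component_lt: "w \<in> component n E v \<Longrightarrow> w < n"
  by (simp add: component_def)

lemma component_subset:
  assumes "v \<in> S" and closed: "\<And>w j. w \<in> S \<Longrightarrow> j < n \<Longrightarrow> E w j \<Longrightarrow> j \<in> S"
  shows "component n E v \<subseteq> S"
proof
  fix x assume "x \<in> component n E v"
  then have "(\<lambda>u v. u < n \<and> v < n \<and> E u v)\<^sup>*\<^sup>* v x"
    by (simp add: component_def reach_def)
  then show "x \<in> S"
    by (induct rule: rtranclp_induct) (use assms in blast)+
qed

lemma mat_app_vanishes_off:
  assumes "vanishes_off n (component n E v) x"
  shows "vanishes_off n (component n E v) (mat_app n Adj x)"
  unfolding vanishes_off_def mat_app_def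
proof (intro allI impI sum.neutral ballI)
  fix i j assume "i < n" "i \<notin> component n E v" "j \<in> {..<n}"
  then show "Adj $$ (i, j) * x j = 0"
    using assms component_closed[of j v i] by (auto simp: vanishes_off_def Adj_entry E_sym)
qed

lemma char_app_vanishes_off:
  assumes "vanishes_off n (component n E v) x"
  shows "vanishes_off n (component n E v) (char_app n Adj c x)"
  using assms mat_app_vanishes_off[OF assms] by (simp add: vanishes_off_def char_app_def)

lemma spectral_proj_vanishes_off:
  assumes "vanishes_off n (component n E v) x"
  shows "vanishes_off n (component n E v) (spectral_proj n Adj e a b c x)"
proof -
  have "vanishes_off n (component n E v) (char_app n Adj a (char_app n Adj b (char_app n Adj c x)))"
    using assms by (intro char_app_vanishes_off)
  then show ?thesis
    by (simp add: vanishes_off_def spectral_proj_def)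
qed

lemma mat_app_component_indicator:
  assumes "i \<in> component n E v"
  shows "mat_app n Adj (\<lambda>j. if j \<in> component n E v then 1 else 0) i = real (degree n E i)"
proof -
  have "mat_app n Adj (\<lambda>j. if j \<in> component n E v then 1 else 0) i = (\<Sum>j<n. if E i j then 1 else 0)"
    unfolding mat_app_def
    using assms component_closed[of i v] component_lt[OF assms] by (intro sum.cong) (auto simp: Adj_entry)
  then show ?thesis
    by (simp add: sum_indicator_card degree_def)
qed

end

section \<open>Graphs with two eigenvalues outside \<open>{2, -1}\<close>\<close>

locale spectral_graph = sgraph +
  fixes r s :: real and a b :: nat
  assumes char_poly: "char_poly (adj_matrix n E) = [:-r, 1:] * [:-s, 1:] * [:-2, 1:] ^ a * [:1, 1:] ^ b"
    and r_gt: "r > 2" and s_lt: "s < -1"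
begin

lemma Adj_carrier: "Adj \<in> carrier_mat n n"
  by (simp add: adj_matrix_def)

lemma char_poly_factored:
  "char_poly Adj = (\<Prod>e\<leftarrow>r # s # replicate a 2 @ replicate b (-1). [:- e, 1:])"
  unfolding char_poly
  by (simp only: map_append prod_list.append list.map map_replicate prod_list_replicate
      prod_list.Cons prod_list.Nil minus_minus mult_1_right mult.assoc)

text \<open>The minimal polynomial of the symmetric matrix \<open>A\<close> has simple roots.\<close>
lemma annihilated:
  "agree n (char_app n Adj r (char_app n Adj s (char_app n Adj 2 (char_app n Adj (-1) x)))) (\<lambda>_. 0)"
proof -
  let ?C = "char_app n Adj"
  have "agree n (char_prod_app n Adj (r # s # replicate a 2 @ replicate b (-1)) x) (\<lambda>_. 0)"
    by (rule cayley_hamilton_factored[OF Adj_carrier char_poly_factored])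
  moreover have "char_prod_app n Adj (r # s # replicate a 2 @ replicate b (-1)) x
      = (?C 2 ^^ a) (?C r (?C s ((?C (-1) ^^ b) x)))"
    by (simp add: char_prod_app_append char_prod_app_replicate funpow_char_app_commute)
      (simp add: char_prod_app_def)
  ultimately have "agree n (?C 2 (?C r (?C s ((?C (-1) ^^ b) x)))) (\<lambda>_. 0)"
    by (simp add: funpow_char_app_kernel)
  then have "agree n ((?C (-1) ^^ b) (?C 2 (?C r (?C s x)))) (\<lambda>_. 0)"
    by (simp add: funpow_char_app_commute)
  then have "agree n (?C (-1) (?C 2 (?C r (?C s x)))) (\<lambda>_. 0)"
    by (rule funpow_char_app_kernel)
  then show ?thesis
    by (simp only: char_app_commute[of n Adj "-1"] char_app_commute[of n Adj 2 r]
        char_app_commute[of n Adj 2 s])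
qed

sublocale four_spectrum n Adj r s 2 "-1"
  by unfold_locales (use r_gt s_lt annihilated in auto)

lemma N_psd: "0 \<le> dot n x (N x)"
proof -
  have "0 \<le> (r - 2) * (r + 1)" "0 \<le> (s - 2) * (s + 1)"
    using r_gt s_lt by (auto intro: mult_nonpos_nonpos)
  then show ?thesis
    using quadratic_form_char_app2[where c = 2 and d = "-1"]
    by (simp add: dot_self_nonneg add_nonneg_nonneg mult_nonneg_nonneg)
qed

lemma dot_char_app_2_le: "dot n x (char_app n Adj 2 x) \<le> (r - 2) * dot n (p1 x) (p1 x)"
proof -
  have "(s - 2) * dot n (p2 x) (p2 x) \<le> 0"
    using s_lt dot_self_nonneg by (simp add: mult_nonpos_nonneg)
  then show ?thesis
    using quadratic_form_char_app[where c = 2] dot_self_nonneg[of n "p4 x"] by simp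
qed

lemma r_eigenspace_simple:
  "in_eigenspace n Adj r u \<Longrightarrow> \<not> agree n u (\<lambda>_. 0) \<Longrightarrow> in_eigenspace n Adj r w \<Longrightarrow>
    \<exists>c. agree n w (\<lambda>i. c * u i)"
  by (rule simple_root_eigenspace[OF Adj_carrier char_poly_factored]) (use r_gt s_lt in auto)

lemma r_eigenvector_exists: "\<exists>u. in_eigenspace n Adj r u \<and> \<not> agree n u (\<lambda>_. 0)"
  by (rule eigenvector_exists[OF Adj_carrier]) (simp add: char_poly_factored)

lemma degree_ge_2: "u < n \<Longrightarrow> 2 \<le> degree n E u"
  using N_psd[of "unit_fn u"] by (simp add: dot_unit_fn N_unit_fn_diag)

lemma N_minor:
  assumes u: "u < n" and v: "v < n" and "u \<noteq> v"
  shows "(N (unit_fn v) u)\<^sup>2 \<le> (real (degree n E u) - 2) * (real (degree n E v) - 2)"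
proof -
  have "(N (unit_fn v) u)\<^sup>2 \<le> N (unit_fn u) u * N (unit_fn v) v"
  proof (rule quadratic_nonneg_discriminant)
    show "0 \<le> N (unit_fn u) u"
      using degree_ge_2[OF u] u by (simp add: N_unit_fn_diag)
    fix t
    have "N (\<lambda>i. t * unit_fn u i + unit_fn v i) = (\<lambda>i. t * N (unit_fn u) i + N (unit_fn v) i)"
      by (simp only: char_app_add char_app_scale)
    then have "0 \<le> t * (t * N (unit_fn u) u + N (unit_fn v) u) + (t * N (unit_fn u) v + N (unit_fn v) v)"
      using N_psd[of "\<lambda>i. t * unit_fn u i + unit_fn v i"] u v
      by (simp add: dot_add_left dot_scale_left dot_unit_fn)
    then show "0 \<le> t * t * N (unit_fn u) u + 2 * t * N (unit_fn v) u + N (unit_fn v) v"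
      using N_unit_fn_sym[OF v u] by (simp add: algebra_simps)
  qed
  then show ?thesis
    using u v by (simp add: N_unit_fn_diag)
qed

lemma common_nbrs_degree_two:
  assumes "u < n" "w < n" "u \<noteq> w" "degree n E u = 2"
  shows "common_nbrs n E u w = (if E u w then 1 else 0)"
proof -
  have "N (unit_fn w) u = 0"
    using N_minor[of u w] assms by simp
  then show ?thesis
    using assms by (simp add: N_unit_fn split: if_splits)
qed

theorem dominated_degree_gap:
  assumes u: "u < n" and v: "v < n" and "u \<noteq> v" "\<not> E u v" and nbrs: "\<forall>w<n. E u w \<longrightarrow> E v w"
  shows "int (degree n E v) - int (degree n E u) \<ge> 5"
proof (rule ccontr)
  let ?du = "real (degree n E u)" and ?dv = "real (degree n E v)"
  assume "\<not> ?thesis"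
  then have "?dv \<le> ?du + 4"
    by linarith
  have "common_nbrs n E u v = degree n E u"
    unfolding common_nbrs_def degree_def
    by (rule arg_cong[where f = card]) (use nbrs v E_sym in blast)
  then have "?du\<^sup>2 \<le> (?du - 2) * (?dv - 2)"
    using N_minor[OF u v] assms by (simp add: N_unit_fn)
  also have "\<dots> \<le> (?du - 2) * (?du + 2)"
    using degree_ge_2[OF u] \<open>?dv \<le> ?du + 4\<close> by (intro mult_left_mono) auto
  also have "\<dots> = ?du\<^sup>2 - 4"
    by (simp add: algebra_simps power2_eq_square)
  finally show False
    by simp
qed

lemma degree_two_triangle:
  assumes v: "v < n" and deg: "degree n E v = 2"
  obtains x y where "x \<noteq> y" "{w. w < n \<and> E v w} = {x, y}" "E x y"
    "\<And>p z. p \<in> {x, y} \<Longrightarrow> z < n \<Longrightarrow> E p z \<Longrightarrow> z \<in> {v, x, y}"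
proof -
  obtain x y where nbrs: "{w. w < n \<and> E v w} = {x, y}" and "x \<noteq> y"
    using deg unfolding degree_def by (auto simp: card_2_iff)
  then have x: "x < n" "E v x" and y: "y < n" "E v y"
    by blast+
  have closed: "z \<in> {v, x, y}" if p: "p \<in> {x, y}" and z: "z < n" "E p z" for p z
  proof (rule ccontr)
    assume z_new: "z \<notin> {v, x, y}"
    then have "\<not> E v z"
      using nbrs z(1) by blast
    moreover have "p \<in> {j. j < n \<and> E v j \<and> E j z}"
      using p x y z by auto
    then have "common_nbrs n E v z \<noteq> 0"
      unfolding common_nbrs_def by (auto simp: card_eq_0_iff)
    ultimately show False
      using common_nbrs_degree_two[OF v z(1) _ deg] z_new by auto
  qed
  have "common_nbrs n E v x = 1"
    using common_nbrs_degree_two[OF v x(1) _ deg] x E_irrefl[OF v] by auto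
  then have "{j. j < n \<and> E v j \<and> E j x} \<noteq> {}"
    unfolding common_nbrs_def by (metis card.empty zero_neq_one)
  then obtain j where "j < n" "E v j" "E j x"
    by blast
  then have "j \<in> {x, y}"
    using nbrs by blast
  then have "E x y"
    using \<open>E j x\<close> E_irrefl[OF x(1)] E_sym[OF x(1) y(1)] by auto
  from that[OF \<open>x \<noteq> y\<close> nbrs this closed] show ?thesis .
qed

lemma degree_two_component:
  assumes v: "v < n" and deg: "degree n E v = 2"
  shows "is_K3 E (component n E v) \<and> (\<forall>z\<in>component n E v. degree n E z = 2)"
proof -
  obtain x y where "x \<noteq> y" and nbrs: "{w. w < n \<and> E v w} = {x, y}" and "E x y"
    and closed: "\<And>p z. p \<in> {x, y} \<Longrightarrow> z < n \<Longrightarrow> E p z \<Longrightarrow> z \<in> {v, x, y}"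
    using degree_two_triangle[OF v deg] by blast
  then have x: "x < n" "E v x" "E x v" and y: "y < n" "E v y" "E y v" and "E y x"
    using E_sym v by blast+
  have "x \<noteq> v" "y \<noteq> v"
    using x y E_irrefl[OF v] by auto
  have "component n E v \<subseteq> {v, x, y}"
    using nbrs closed by (intro component_subset) auto
  moreover have "{v, x, y} \<subseteq> component n E v"
    using component_self[OF v] component_closed[OF component_self[OF v]] x y by auto
  ultimately have C: "component n E v = {v, x, y}"
    by blast
  have "{w. w < n \<and> E x w} = {v, y}" "{w. w < n \<and> E y w} = {v, x}"
    using closed[of x] closed[of y] x y v \<open>E x y\<close> \<open>E y x\<close> E_irrefl by auto
  then have "degree n E x = 2" "degree n E y = 2"
    using \<open>x \<noteq> v\<close> \<open>y \<noteq> v\<close> by (simp_all add: degree_def)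
  moreover have "is_K3 E {v, x, y}"
    unfolding is_K3_def using \<open>x \<noteq> y\<close> \<open>x \<noteq> v\<close> \<open>y \<noteq> v\<close> x y \<open>E x y\<close> \<open>E y x\<close> by auto
  ultimately show ?thesis
    using C deg by auto
qed

text \<open>The indicator vector \<open>h\<close> of such a component has \<open>h \<bullet> (A - 2I)h > 0\<close>, so its
  projection onto the \<open>r\<close>-eigenspace is nonzero; like \<open>h\<close>, it vanishes off the component.\<close>
lemma r_eigenvector_on_component:
  assumes v0: "v0 < n" and dense: "\<forall>w\<in>component n E v0. 3 \<le> degree n E w"
  shows "\<exists>u. in_eigenspace n Adj r u \<and> \<not> agree n u (\<lambda>_. 0)
    \<and> vanishes_off n (component n E v0) u"
proof -
  define h where "h = (\<lambda>i. if i \<in> component n E v0 then 1 else (0::real))"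
  have "1 \<le> (\<Sum>i<n. h i * (mat_app n Adj h i - 2 * h i))"
  proof -
    have "1 = h v0 * (1 :: real)"
      using component_self[OF v0] by (simp add: h_def)
    also have "\<dots> \<le> h v0 * (mat_app n Adj h v0 - 2 * h v0)"
      using dense component_self[OF v0] mat_app_component_indicator[of v0 v0]
      by (simp add: h_def)
    also have "\<dots> \<le> (\<Sum>i<n. h i * (mat_app n Adj h i - 2 * h i))"
      using dense mat_app_component_indicator v0 unfolding h_def
      by (intro member_le_sum) auto
    finally show ?thesis .
  qed
  then have "0 < dot n h (char_app n Adj 2 h)"
    by (simp add: dot_def char_app_def)
  then have "dot n (p1 h) (p1 h) \<noteq> 0"
    using dot_char_app_2_le[of h] r_gt by (auto simp: mult_le_0_iff)
  moreover have "vanishes_off n (component n E v0) (p1 h)"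
    by (rule spectral_proj_vanishes_off) (simp add: vanishes_off_def h_def)
  ultimately show ?thesis
    using in_eigenspace_p(1)[of h] dot_self_eq_zero by blast
qed

lemma high_degree_component_unique:
  assumes "v1 < n" "v2 < n"
    and "\<forall>w\<in>component n E v1. 3 \<le> degree n E w" "\<forall>w\<in>component n E v2. 3 \<le> degree n E w"
  shows "component n E v1 = component n E v2"
proof (rule ccontr)
  assume distinct: "component n E v1 \<noteq> component n E v2"
  obtain u1 where u1: "in_eigenspace n Adj r u1" "\<not> agree n u1 (\<lambda>_. 0)"
    "vanishes_off n (component n E v1) u1"
    using r_eigenvector_on_component assms by blast
  obtain u2 where u2: "in_eigenspace n Adj r u2" "\<not> agree n u2 (\<lambda>_. 0)"
    "vanishes_off n (component n E v2) u2"
    using r_eigenvector_on_component assms by blast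
  obtain c where c: "agree n u2 (\<lambda>i. c * u1 i)"
    using r_eigenspace_simple[OF u1(1,2) u2(1)] by blast
  obtain i where i: "i < n" "u2 i \<noteq> 0"
    using u2(2) by (auto simp: agree_def)
  then have "i \<notin> component n E v1"
    using u2(3) component_eq distinct unfolding vanishes_off_def by metis
  then show False
    using c i u1(3) by (simp add: agree_def vanishes_off_def)
qed

lemma exists_degree_ge_3: "\<exists>v<n. 3 \<le> degree n E v"
proof (rule ccontr)
  assume "\<not> ?thesis"
  then have deg: "degree n E v = 2" if "v < n" for v
    using degree_ge_2[OF that] that by force
  have N_unit_fn_zero: "agree n (N (unit_fn v)) (\<lambda>_. 0)" if "v < n" for v
    unfolding agree_def
  proof (intro allI impI)
    fix w assume "w < n"
    then show "N (unit_fn v) w = 0"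
      using that common_nbrs_degree_two[OF \<open>w < n\<close> that _ deg] deg
      by (cases "w = v") (auto simp: N_unit_fn_diag N_unit_fn)
  qed
  obtain u where u: "in_eigenspace n Adj r u" "\<not> agree n u (\<lambda>_. 0)"
    using r_eigenvector_exists by blast
  have "agree n (N u) (\<lambda>i. (r - 2) * (r + 1) * u i)"
  proof -
    have "agree n (N u) (char_app n Adj 2 (\<lambda>i. (r + 1) * u i))"
      using in_eigenspace_char_app[OF u(1), of "-1"] by (intro char_app_cong) simp
    also have "agree n \<dots> (\<lambda>i. (r + 1) * ((r - 2) * u i))"
      using in_eigenspace_char_app[OF u(1), of 2] by (simp add: char_app_scale agree_def)
    finally show ?thesis
      by (simp add: agree_def mult_ac)
  qed
  moreover have "N u i = 0" if "i < n" for i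
    using N_entrywise[OF that] dot_cong[OF N_unit_fn_zero[OF that] agree_refl]
    by (simp add: dot_def)
  ultimately have "agree n u (\<lambda>_. 0)"
    using r_gt by (auto simp: agree_def)
  with u(2) show False ..
qed

lemma component_K3_or_high_degree:
  assumes w: "w < n"
  shows "(is_K3 E (component n E w) \<and> (\<forall>z\<in>component n E w. degree n E z = 2))
    \<or> (\<forall>z\<in>component n E w. 3 \<le> degree n E z)"
proof (cases "\<exists>z\<in>component n E w. degree n E z = 2")
  case True
  then obtain z where z: "z \<in> component n E w" "degree n E z = 2"
    by blast
  then have "z < n" "component n E z = component n E w"
    by (metis component_lt, metis component_eq)
  then show ?thesis
    using degree_two_component[of z] z(2) by simp
next
  case False
  have "3 \<le> degree n E z" if "z \<in> component n E w" for z
    using degree_ge_2[OF component_lt[OF that]] False that by fastforce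
  then show ?thesis
    by blast
qed

theorem component_structure:
  "\<exists>C\<in>components n E. (\<forall>v\<in>C. 3 \<le> degree n E v) \<and> (\<forall>D\<in>components n E. D \<noteq> C \<longrightarrow> is_K3 E D)"
proof -
  obtain v0 where v0: "v0 < n" "3 \<le> degree n E v0"
    using exists_degree_ge_3 by blast
  then have "\<not> (\<forall>z\<in>component n E v0. degree n E z = 2)"
    using component_self[OF v0(1)] by force
  then have high: "\<forall>v\<in>component n E v0. 3 \<le> degree n E v"
    using component_K3_or_high_degree[OF v0(1)] by blast
  have "is_K3 E D" if D: "D \<in> components n E" "D \<noteq> component n E v0" for D
  proof -
    obtain w where w: "w < n" "D = component n E w"
      using D(1) by (auto simp: components_def)
    then have "\<not> (\<forall>z\<in>component n E w. 3 \<le> degree n E z)"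
      using high_degree_component_unique[OF w(1) v0(1) _ high] D(2) by blast
    then show ?thesis
      using component_K3_or_high_degree[OF w(1)] w(2) by blast
  qed
  moreover have "component n E v0 \<in> components n E"
    using v0(1) by (simp add: components_def)
  ultimately show ?thesis
    using high by blast
qed

end

theorem lemma2p5:
  fixes n :: nat and E :: "nat \<Rightarrow> nat \<Rightarrow> bool" and r s :: real and a b :: nat
  assumes "simple_graph n E"
    and "char_poly (adj_matrix n E) = [:-r, 1:] * [:-s, 1:] * [:-2, 1:] ^ a * [:1, 1:] ^ b"
    and "r > 2" and "s < -1"
  shows "(\<exists>C\<in>components n E. (\<forall>v\<in>C. degree n E v \<ge> 3)
            \<and> (\<forall>D\<in>components n E. D \<noteq> C \<longrightarrow> is_K3 E D))
       \<and> (\<forall>u<n. \<forall>v<n. u \<noteq> v \<and> \<not> E u v \<and> (\<forall>w<n. E u w \<longrightarrow> E v w)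
            \<longrightarrow> int (degree n E v) - int (degree n E u) \<ge> 5)"
proof -
  interpret spectral_graph n E r s a b
    using assms by unfold_locales
  show ?thesis
    using component_structure dominated_degree_gap by blast
qed

end
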